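(* Let $X$ be a real random variable with distribution $F$ and mean $\mu$, let $\psi(\theta)=\log E[e^{\theta X}]$ and $\mathcal D=\{\theta:\psi(\theta)<\infty\}$. Let $b>\mu$, suppose $0\in\mathcal D^\circ$ and there is a unique $\theta^*\in\mathcal D^\circ$ with $\psi'(\theta^* )=b$. Let $(u_n)$ be a sequence of truncation levels for which there exists $\theta'>0$ with $\theta^*+\theta'\in\mathcal D^\circ$ and $\lim_{n\to\infty}ne^{-\theta' u_n}=0$. Define $\psi_n(\theta)=\log E[e^{\theta X}\mid X\le u_n]$. Then $$\lim_{n\to\infty}n\big(\psi_n'(\theta^* )-\psi'(\theta^* )\big)=0,\qquad \lim_{n\to\infty}n\big(\psi_n(\theta^* )-\psi(\theta^* )\big)=0.$$
   Context: $\mathcal D^\circ$ denotes the interior of $\mathcal D$. *)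

theory Defs
  imports "HOL-Probability.Probability"
begin

text \<open>F is the distribution of X, modelled as a probability measure on the Borel reals.\<close>

definition cgf :: "real measure \<Rightarrow> real \<Rightarrow> real" where
  "cgf F \<theta> = ln (\<integral>x. exp (\<theta> * x) \<partial>F)"

definition cgf_dom :: "real measure \<Rightarrow> real set" where
  "cgf_dom F = {\<theta>. integrable F (\<lambda>x. exp (\<theta> * x))}"

definition trunc_cgf :: "real measure \<Rightarrow> real \<Rightarrow> real \<Rightarrow> real" where
  "trunc_cgf F u \<theta> = ln ((LINT x:{..u}|F. exp (\<theta> * x)) / measure F {..u})"

end

theory Submission
  imports Defs
begin

(*
  Write M(t) = E e^(tX) and T(u) = E[X e^(theta X); X > u] at theta = theta_s.
  Since psi' is the mean of the exponentially tilted law, Chebyshev's covariance inequality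
  gives psi'(t) <= E X for t <= 0, so psi'(theta_s) = b > mu forces theta_s >= 0.
  Truncation at u only removes the tails E[e^(theta X); X > u] and T(u) from M(theta) and
  M'(theta), and P(X > u) from the normalisation; for theta >= 0 and u >= 1 all three are
  at most T(u). Perturbation bounds for a quotient and a logarithm then bound both
  |psi_u'(theta) - psi'(theta)| and |psi_u(theta) - psi(theta)| by a constant times T(u).
  Finally x <= e^(eps x) / eps, with theta + theta' + eps still in the domain, gives
  T(u) <= C e^(-theta' u), hence n T(u_n) -> 0.
*)

lemma power_div_fact_le_exp:
  fixes x :: real
  assumes "0 \<le> x"
  shows "x ^ k / fact k \<le> exp x"
proof -
  obtain t where t: "exp x = (\<Sum>m<Suc k. x ^ m / fact m) + exp t / fact (Suc k) * x ^ Suc k"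
    using Maclaurin_exp_le by blast
  have "x ^ k / fact k \<le> (\<Sum>m<Suc k. x ^ m / fact m)"
    using assms by (intro member_le_sum) auto
  also have "\<dots> \<le> exp x"
    unfolding t using assms by simp
  finally show ?thesis .
qed

lemma le_exp_mult_div:
  fixes x \<epsilon> :: real
  assumes "0 < \<epsilon>"
  shows "x \<le> exp (\<epsilon> * x) / \<epsilon>"
proof -
  have "\<epsilon> * x \<le> exp (\<epsilon> * x)"
    using exp_ge_add_one_self[of "\<epsilon> * x"] by linarith
  then show ?thesis
    using assms by (simp add: pos_le_divide_eq mult.commute)
qed

lemma abs_exp_minus_one_minus_le: "\<bar>exp y - 1 - y\<bar> \<le> y\<^sup>2 * exp \<bar>y\<bar>"
  for y :: real
proof -
  obtain t where t: "\<bar>t\<bar> \<le> \<bar>y\<bar>" "exp y = (\<Sum>m<2. y ^ m / fact m) + exp t / fact 2 * y\<^sup>2"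
    using Maclaurin_exp_le by blast
  then have "\<bar>exp y - 1 - y\<bar> = exp t / 2 * y\<^sup>2"
    by (simp add: numeral_2_eq_2)
  also have "\<dots> \<le> y\<^sup>2 * exp \<bar>y\<bar>"
  proof -
    have "exp t \<le> 2 * exp \<bar>y\<bar>"
      using t(1) by (smt (verit) exp_gt_zero exp_le_cancel_iff)
    from mult_right_mono[OF this zero_le_power2[of y]] show ?thesis
      by (simp add: algebra_simps)
  qed
  finally show ?thesis .
qed

lemma abs_exp_mult_remainder_le:
  fixes h d \<theta> x :: real
  assumes "\<bar>h\<bar> \<le> d"
  shows "\<bar>exp ((\<theta> + h) * x) - exp (\<theta> * x) - h * (x * exp (\<theta> * x))\<bar>
    \<le> h\<^sup>2 * (\<bar>x\<bar> ^ 2 * exp (d * \<bar>x\<bar>) * exp (\<theta> * x))"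
proof -
  have "exp ((\<theta> + h) * x) - exp (\<theta> * x) - h * (x * exp (\<theta> * x))
      = (exp (h * x) - 1 - h * x) * exp (\<theta> * x)"
    by (simp add: algebra_simps exp_add)
  then have "\<bar>exp ((\<theta> + h) * x) - exp (\<theta> * x) - h * (x * exp (\<theta> * x))\<bar>
      = \<bar>exp (h * x) - 1 - h * x\<bar> * exp (\<theta> * x)"
    by (simp add: abs_mult)
  also have "\<dots> \<le> (h * x)\<^sup>2 * exp \<bar>h * x\<bar> * exp (\<theta> * x)"
    by (intro mult_right_mono abs_exp_minus_one_minus_le) simp
  also have "\<dots> \<le> (h * x)\<^sup>2 * exp (d * \<bar>x\<bar>) * exp (\<theta> * x)"
  proof -
    have "\<bar>h * x\<bar> \<le> d * \<bar>x\<bar>"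
      unfolding abs_mult using assms by (rule mult_right_mono) simp
    then show ?thesis
      by (intro mult_right_mono mult_left_mono) auto
  qed
  finally show ?thesis
    by (simp add: power_mult_distrib mult_ac)
qed

lemma exp_abs_mult_le: "exp (c * \<bar>x\<bar>) * exp (\<theta> * x) \<le> exp ((\<theta> + c) * x) + exp ((\<theta> - c) * x)"
  for c x \<theta> :: real
  by (cases "x \<ge> 0") (simp_all add: mult_exp_exp algebra_simps add_increasing add_increasing2)

lemma abs_ln_one_minus_le:
  fixes a :: real
  assumes "0 \<le> a" "a \<le> 1/2"
  shows "\<bar>ln (1 - a)\<bar> \<le> 2 * a"
proof -
  have "- ln (1 - a) = ln (1 / (1 - a))"
    using assms by (simp add: ln_div)
  also have "\<dots> \<le> 1 / (1 - a) - 1"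
    using assms by (intro ln_le_minus_one) simp
  also have "\<dots> \<le> 2 * a"
    using assms by (simp add: field_simps) (simp add: mult_left_le)
  finally show ?thesis
    using assms by simp
qed

lemma ratio_perturbation_le:
  fixes M M1 S T :: real
  assumes "0 < M" "0 \<le> T" "T \<le> S" "S \<le> M / 2"
  shows "\<bar>(M1 - S) / (M - T) - M1 / M\<bar> \<le> 2 * (\<bar>M1\<bar> + M) / M\<^sup>2 * S"
proof -
  have "(M1 - S) / (M - T) - M1 / M = (M1 * T - S * M) / ((M - T) * M)"
    using assms by (simp add: field_simps)
  then have "\<bar>(M1 - S) / (M - T) - M1 / M\<bar> = \<bar>M1 * T - S * M\<bar> / ((M - T) * M)"
    using assms by simp
  also have "\<dots> \<le> (\<bar>M1\<bar> * S + M * S) / (M / 2 * M)"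
  proof (rule frac_le)
    have "\<bar>M1 * T - S * M\<bar> \<le> \<bar>M1\<bar> * T + M * S"
      using assms abs_triangle_ineq4[of "M1 * T" "S * M"] by (simp add: abs_mult mult.commute)
    also have "\<dots> \<le> \<bar>M1\<bar> * S + M * S"
      using assms by (simp add: mult_left_mono)
    finally show "\<bar>M1 * T - S * M\<bar> \<le> \<bar>M1\<bar> * S + M * S" .
  qed (use assms in \<open>auto intro: mult_right_mono\<close>)
  also have "\<dots> = 2 * (\<bar>M1\<bar> + M) / M\<^sup>2 * S"
    by (simp add: power2_eq_square algebra_simps)
  finally show ?thesis .
qed

lemma ln_ratio_perturbation_le:
  fixes M S T q :: real
  assumes "0 < M" "0 \<le> q" "q \<le> T" "T \<le> S" "S \<le> M / 2" "S \<le> 1 / 2"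
  shows "\<bar>ln ((M - T) / (1 - q)) - ln M\<bar> \<le> (2 / M + 2) * S"
proof -
  have "M - T = M * (1 - T / M)"
    using assms by (simp add: field_simps)
  then have "ln ((M - T) / (1 - q)) - ln M = ln (1 - T / M) - ln (1 - q)"
    using assms by (simp add: ln_div ln_mult field_simps)
  moreover have "0 \<le> T / M" "T / M \<le> 1 / 2" "q \<le> 1 / 2"
    using assms by (simp_all add: field_simps)
  then have "\<bar>ln (1 - T / M) - ln (1 - q)\<bar> \<le> 2 * (T / M) + 2 * q"
    using abs_ln_one_minus_le abs_ln_one_minus_le[OF assms(2)]
      abs_triangle_ineq4[of "ln (1 - T / M)" "ln (1 - q)"] by (smt (verit))
  also have "\<dots> \<le> 2 * (S / M) + 2 * S"
    using assms by (intro add_mono mult_left_mono divide_right_mono) auto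
  also have "\<dots> = (2 / M + 2) * S"
    by (simp add: algebra_simps)
  ultimately show ?thesis
    by simp
qed

lemma DERIV_of_quadratic_remainder:
  fixes f :: "real \<Rightarrow> real"
  assumes "0 < \<delta>" and remainder: "\<And>h. \<bar>h\<bar> < \<delta> \<Longrightarrow> \<bar>f (x + h) - f x - h * D\<bar> \<le> C * h\<^sup>2"
  shows "(f has_real_derivative D) (at x)"
proof -
  have "((\<lambda>h. (f (x + h) - f x) / h - D) \<longlongrightarrow> 0) (at 0)"
  proof (rule Lim_null_comparison)
    have "norm ((f (x + h) - f x) / h - D) \<le> C * \<bar>h\<bar>" if "h \<noteq> 0" "\<bar>h\<bar> < \<delta>" for h
    proof -
      have "(f (x + h) - f x) / h - D = (f (x + h) - f x - h * D) / h"
        using that by (simp add: diff_divide_distrib)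
      then have "norm ((f (x + h) - f x) / h - D) = \<bar>f (x + h) - f x - h * D\<bar> / \<bar>h\<bar>"
        by simp
      also have "\<dots> \<le> C * h\<^sup>2 / \<bar>h\<bar>"
        using remainder[OF that(2)] by (simp add: divide_right_mono)
      also have "\<dots> = C * \<bar>h\<bar> * \<bar>h\<bar> / \<bar>h\<bar>"
        by (simp add: power2_eq_square mult.assoc)
      also have "\<dots> = C * \<bar>h\<bar>"
        using that(1) by (simp only: nonzero_mult_div_cancel_right abs_eq_0 not_False_eq_True)
      finally show ?thesis .
    qed
    then show "\<forall>\<^sub>F h in at 0. norm ((f (x + h) - f x) / h - D) \<le> C * \<bar>h\<bar>"
      unfolding eventually_at using \<open>0 < \<delta>\<close> by (auto simp: dist_real_def intro!: exI[of _ \<delta>])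
    show "((\<lambda>h. C * \<bar>h\<bar>) \<longlongrightarrow> 0) (at 0)"
      by (intro tendsto_mult_right_zero tendsto_rabs_zero tendsto_ident_at)
  qed
  then show ?thesis
    unfolding DERIV_def LIM_zero_iff .
qed

lemma cball_subset_cgf_dom:
  assumes "\<theta> \<in> interior (cgf_dom F)"
  obtains c where "0 < c" "cball \<theta> c \<subseteq> cgf_dom F"
  using assms open_interior open_contains_cball interior_subset by (metis subset_trans)

lemma integrable_abs_power_exp:
  assumes S: "sets F = sets borel"
    and dom: "\<theta> - c \<in> cgf_dom F" "\<theta> + c \<in> cgf_dom F" and d: "0 \<le> d" "d < c"
  shows "integrable F (\<lambda>x. \<bar>x\<bar> ^ k * exp (d * \<bar>x\<bar>) * exp (\<theta> * x))"
proof (rule Bochner_Integration.integrable_bound)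
  define K where "K = fact k / (c - d) ^ k"
  show "integrable F (\<lambda>x. K * (exp ((\<theta> + c) * x) + exp ((\<theta> - c) * x)))"
    using dom by (auto simp: cgf_dom_def)
  show "(\<lambda>x. \<bar>x\<bar> ^ k * exp (d * \<bar>x\<bar>) * exp (\<theta> * x)) \<in> borel_measurable F"
    unfolding measurable_cong_sets[OF S refl] by measurable
  show "AE x in F. norm (\<bar>x\<bar> ^ k * exp (d * \<bar>x\<bar>) * exp (\<theta> * x))
      \<le> norm (K * (exp ((\<theta> + c) * x) + exp ((\<theta> - c) * x)))"
  proof (rule AE_I2)
    fix x
    have "\<bar>x\<bar> ^ k = K * (((c - d) * \<bar>x\<bar>) ^ k / fact k)"
      using d by (simp add: K_def power_mult_distrib)
    also have "\<dots> \<le> K * exp ((c - d) * \<bar>x\<bar>)"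
      using d by (intro mult_left_mono power_div_fact_le_exp) (simp_all add: K_def)
    finally have "\<bar>x\<bar> ^ k \<le> K * exp ((c - d) * \<bar>x\<bar>)" .
    then have "\<bar>x\<bar> ^ k * exp (d * \<bar>x\<bar>) \<le> K * exp ((c - d) * \<bar>x\<bar>) * exp (d * \<bar>x\<bar>)"
      by (rule mult_right_mono) simp
    also have "\<dots> = K * exp (c * \<bar>x\<bar>)"
      by (simp add: mult.assoc mult_exp_exp algebra_simps)
    finally have "\<bar>x\<bar> ^ k * exp (d * \<bar>x\<bar>) * exp (\<theta> * x) \<le> K * (exp (c * \<bar>x\<bar>) * exp (\<theta> * x))"
      by (simp add: mult_right_mono mult.assoc)
    also have "\<dots> \<le> K * (exp ((\<theta> + c) * x) + exp ((\<theta> - c) * x))"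
      using d by (intro mult_left_mono exp_abs_mult_le) (simp add: K_def)
    finally show "norm (\<bar>x\<bar> ^ k * exp (d * \<bar>x\<bar>) * exp (\<theta> * x))
        \<le> norm (K * (exp ((\<theta> + c) * x) + exp ((\<theta> - c) * x)))"
      by simp
  qed
qed

lemma integrable_mult_exp:
  assumes "sets F = sets borel" "\<theta> \<in> interior (cgf_dom F)"
  shows "integrable F (\<lambda>x. x * exp (\<theta> * x))"
proof (rule Bochner_Integration.integrable_bound)
  obtain c where c: "0 < c" "cball \<theta> c \<subseteq> cgf_dom F"
    using cball_subset_cgf_dom[OF assms(2)] .
  then show "integrable F (\<lambda>x. \<bar>x\<bar> ^ 1 * exp (0 * \<bar>x\<bar>) * exp (\<theta> * x))"
    by (intro integrable_abs_power_exp[OF assms(1), where c = c]) (auto simp: dist_real_def)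
  show "(\<lambda>x. x * exp (\<theta> * x)) \<in> borel_measurable F"
    unfolding measurable_cong_sets[OF assms(1) refl] by measurable
qed (simp add: abs_mult)

lemma has_real_derivative_set_mgf:
  assumes S: "sets F = sets borel" and A: "A \<in> sets borel"
    and \<theta>: "\<theta> \<in> interior (cgf_dom F)"
  shows "((\<lambda>t. LINT x:A|F. exp (t * x)) has_real_derivative (LINT x:A|F. x * exp (\<theta> * x))) (at \<theta>)"
proof -
  obtain c where c: "0 < c" "cball \<theta> c \<subseteq> cgf_dom F"
    using cball_subset_cgf_dom[OF \<theta>] .
  have dom: "t \<in> cgf_dom F" if "\<bar>t - \<theta>\<bar> \<le> c" for t
    using c that by (auto simp: dist_real_def abs_minus_commute)
  have A': "A \<in> sets F"
    using A S by simp
  define C where "C = (\<integral>x. \<bar>x\<bar> ^ 2 * exp (c / 2 * \<bar>x\<bar>) * exp (\<theta> * x) \<partial>F)"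
  have iC: "integrable F (\<lambda>x. \<bar>x\<bar> ^ 2 * exp (c / 2 * \<bar>x\<bar>) * exp (\<theta> * x))"
    using c by (intro integrable_abs_power_exp[OF S, where c = c] dom) auto
  have i1: "integrable F (\<lambda>x. indicator A x * (x * exp (\<theta> * x)))"
    using integrable_mult_indicator[OF A' integrable_mult_exp[OF S \<theta>]] by simp
  have i0: "integrable F (\<lambda>x. indicator A x * exp (t * x))" if "\<bar>t - \<theta>\<bar> \<le> c" for t
    using integrable_mult_indicator[OF A', of "\<lambda>x. exp (t * x)"] dom[OF that]
    by (simp add: cgf_dom_def)
  show ?thesis
  proof (rule DERIV_of_quadratic_remainder[where \<delta> = "c / 2" and C = C])
    fix h :: real
    assume h: "\<bar>h\<bar> < c / 2"
    have "\<bar>indicator A x * exp ((\<theta> + h) * x) - indicator A x * exp (\<theta> * x)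
            - h * (indicator A x * (x * exp (\<theta> * x)))\<bar>
          \<le> h\<^sup>2 * (\<bar>x\<bar> ^ 2 * exp (c / 2 * \<bar>x\<bar>) * exp (\<theta> * x))" for x
      using abs_exp_mult_remainder_le[of h "c / 2" \<theta> x] h by (cases "x \<in> A") auto
    then have "\<bar>\<integral>x. indicator A x * exp ((\<theta> + h) * x) - indicator A x * exp (\<theta> * x)
                 - h * (indicator A x * (x * exp (\<theta> * x))) \<partial>F\<bar>
               \<le> (\<integral>x. h\<^sup>2 * (\<bar>x\<bar> ^ 2 * exp (c / 2 * \<bar>x\<bar>) * exp (\<theta> * x)) \<partial>F)"
      using i0[of "\<theta> + h"] i0[of \<theta>] i1 iC h
      by (intro integral_abs_bound_integral) auto
    then show "\<bar>(LINT x:A|F. exp ((\<theta> + h) * x)) - (LINT x:A|F. exp (\<theta> * x))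
                 - h * (LINT x:A|F. x * exp (\<theta> * x))\<bar> \<le> C * h\<^sup>2"
      using i0[of "\<theta> + h"] i0[of \<theta>] i1 h
      by (simp add: set_lebesgue_integral_def C_def mult.commute)
  qed (use c in simp)
qed

lemma has_real_derivative_ln_set_mgf:
  assumes "sets F = sets borel" "A \<in> sets borel" "\<theta> \<in> interior (cgf_dom F)"
    and "0 < p" "0 < (LINT x:A|F. exp (\<theta> * x))"
  shows "((\<lambda>t. ln ((LINT x:A|F. exp (t * x)) / p)) has_real_derivative
           (LINT x:A|F. x * exp (\<theta> * x)) / (LINT x:A|F. exp (\<theta> * x))) (at \<theta>)"
  using assms
  by (auto intro!: derivative_eq_intros has_real_derivative_set_mgf simp: field_simps)

lemma mgf_pos:
  fixes \<theta> :: real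
  assumes "prob_space F" "integrable F (\<lambda>x. exp (\<theta> * x))"
  shows "0 < (\<integral>x. exp (\<theta> * x) \<partial>F)"
proof -
  have "(\<integral>x. exp (\<theta> * x) \<partial>F) \<noteq> 0"
  proof
    assume "(\<integral>x. exp (\<theta> * x) \<partial>F) = 0"
    then have "AE x in F. exp (\<theta> * x) = 0"
      using integral_nonneg_eq_0_iff_AE[OF assms(2)] by simp
    then show False
      using prob_space.AE_False[OF assms(1)] by simp
  qed
  moreover have "0 \<le> (\<integral>x. exp (\<theta> * x) \<partial>F)"
    by (intro integral_nonneg_AE) simp
  ultimately show ?thesis
    by linarith
qed

lemma deriv_cgf:
  assumes "prob_space F" "sets F = sets borel" "\<theta> \<in> interior (cgf_dom F)"
  shows "deriv (cgf F) \<theta> = (\<integral>x. x * exp (\<theta> * x) \<partial>F) / (\<integral>x. exp (\<theta> * x) \<partial>F)"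
proof -
  have "0 < (\<integral>x. exp (\<theta> * x) \<partial>F)"
    using assms interior_subset by (intro mgf_pos) (auto simp: cgf_dom_def)
  then have "(cgf F has_real_derivative
      (\<integral>x. x * exp (\<theta> * x) \<partial>F) / (\<integral>x. exp (\<theta> * x) \<partial>F)) (at \<theta>)"
    using has_real_derivative_ln_set_mgf[OF assms(2) _ assms(3), of UNIV 1]
    by (simp add: cgf_def[abs_def] set_lebesgue_integral_def)
  then show ?thesis
    by (rule DERIV_imp_deriv)
qed

lemma deriv_trunc_cgf:
  assumes "sets F = sets borel" "\<theta> \<in> interior (cgf_dom F)"
    and "0 < measure F {..v}" "0 < (LINT x:{..v}|F. exp (\<theta> * x))"
  shows "deriv (trunc_cgf F v) \<theta> = (LINT x:{..v}|F. x * exp (\<theta> * x)) / (LINT x:{..v}|F. exp (\<theta> * x))"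
  unfolding trunc_cgf_def[abs_def]
  using assms by (intro DERIV_imp_deriv has_real_derivative_ln_set_mgf) auto

lemma deriv_cgf_le_mean:
  assumes "prob_space F" "sets F = sets borel" "\<theta> \<in> interior (cgf_dom F)" "\<theta> \<le> 0"
    and "integrable F (\<lambda>x. x)"
  shows "deriv (cgf F) \<theta> \<le> (\<integral>x. x \<partial>F)"
proof -
  interpret prob_space F by fact
  define \<mu> where "\<mu> = (\<integral>x. x \<partial>F)"
  define M where "M = (\<integral>x. exp (\<theta> * x) \<partial>F)"
  define M1 where "M1 = (\<integral>x. x * exp (\<theta> * x) \<partial>F)"
  have iM: "integrable F (\<lambda>x. exp (\<theta> * x))"
    using assms(3) interior_subset by (auto simp: cgf_dom_def)
  have iM1: "integrable F (\<lambda>x. x * exp (\<theta> * x))"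
    using integrable_mult_exp[OF assms(2,3)] .
  have "0 \<le> (x - \<mu>) * (exp (\<theta> * \<mu>) - exp (\<theta> * x))" for x
  proof (cases "x \<le> \<mu>")
    case True
    then have "exp (\<theta> * \<mu>) \<le> exp (\<theta> * x)"
      using assms(4) by (simp add: mult_left_mono_neg)
    then show ?thesis
      using True by (intro mult_nonpos_nonpos) auto
  next
    case False
    then have "exp (\<theta> * x) \<le> exp (\<theta> * \<mu>)"
      using assms(4) by (simp add: mult_left_mono_neg)
    then show ?thesis
      using False by (intro mult_nonneg_nonneg) auto
  qed
  then have "0 \<le> (\<integral>x. (x - \<mu>) * (exp (\<theta> * \<mu>) - exp (\<theta> * x)) \<partial>F)"
    by (intro integral_nonneg_AE) auto
  also have "\<dots> = \<mu> * M - M1"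
    using iM iM1 assms(5)
    by (simp add: algebra_simps M_def M1_def \<mu>_def prob_space)
  finally show ?thesis
    using deriv_cgf[OF assms(1-3)] mgf_pos[OF assms(1) iM]
    by (simp add: M_def M1_def \<mu>_def divide_le_eq mult.commute)
qed

lemma set_integral_atMost_eq_diff:
  fixes f :: "real \<Rightarrow> real"
  assumes "sets F = sets borel" "integrable F f"
  shows "(LINT x:{..v}|F. f x) = (\<integral>x. f x \<partial>F) - (LINT x:{v<..}|F. f x)"
proof -
  have "set_integrable F A f" if "A \<in> sets borel" for A
    unfolding set_integrable_def using assms that by (intro integrable_mult_indicator) auto
  then have "(LINT x:{..v} \<union> {v<..}|F. f x) = (LINT x:{..v}|F. f x) + (LINT x:{v<..}|F. f x)"
    by (intro set_integral_Un) auto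
  moreover have "{..v} \<union> {v<..} = UNIV"
    by auto
  ultimately show ?thesis
    by (simp add: set_lebesgue_integral_def)
qed

definition tail_moment :: "real measure \<Rightarrow> real \<Rightarrow> real \<Rightarrow> real" where
  "tail_moment F \<theta> v = (LINT x:{v<..}|F. x * exp (\<theta> * x))"

lemma tail_moment_nonneg: "0 \<le> v \<Longrightarrow> 0 \<le> tail_moment F \<theta> v"
  unfolding tail_moment_def set_lebesgue_integral_def
  by (intro integral_nonneg_AE) (auto simp: indicator_def)

lemma tail_moment_le:
  assumes "sets F = sets borel" "0 < \<epsilon>" "0 \<le> \<theta>'" "\<theta> + \<theta>' + \<epsilon> \<in> cgf_dom F"
  shows "tail_moment F \<theta> v \<le> exp (- \<theta>' * v) * (\<integral>x. exp ((\<theta> + \<theta>' + \<epsilon>) * x) \<partial>F) / \<epsilon>"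
proof -
  have "tail_moment F \<theta> v \<le> (\<integral>x. exp (- \<theta>' * v) / \<epsilon> * exp ((\<theta> + \<theta>' + \<epsilon>) * x) \<partial>F)"
    unfolding tail_moment_def set_lebesgue_integral_def
  proof (rule integral_mono')
    show "integrable F (\<lambda>x. exp (- \<theta>' * v) / \<epsilon> * exp ((\<theta> + \<theta>' + \<epsilon>) * x))"
      using assms(4) by (simp add: cgf_dom_def)
    fix x
    show "0 \<le> exp (- \<theta>' * v) / \<epsilon> * exp ((\<theta> + \<theta>' + \<epsilon>) * x)"
      using assms(2) by simp
    show "indicator {v<..} x *\<^sub>R (x * exp (\<theta> * x))
        \<le> exp (- \<theta>' * v) / \<epsilon> * exp ((\<theta> + \<theta>' + \<epsilon>) * x)"
    proof (cases "v < x")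
      case True
      have "x * exp (\<theta> * x) \<le> exp (\<epsilon> * x) / \<epsilon> * exp (\<theta> * x)"
        using assms(2) by (intro mult_right_mono le_exp_mult_div) auto
      also have "\<dots> = exp (- \<theta>' * x) / \<epsilon> * exp ((\<theta> + \<theta>' + \<epsilon>) * x)"
        by (simp add: algebra_simps flip: exp_add)
      also have "\<dots> \<le> exp (- \<theta>' * v) / \<epsilon> * exp ((\<theta> + \<theta>' + \<epsilon>) * x)"
        using True assms(2,3) by (intro mult_right_mono divide_right_mono) (auto simp: mult_left_mono)
      finally show ?thesis
        using True by simp
    qed (use assms(2) in simp)
  qed
  then show ?thesis
    by simp
qed

lemma tail_moment_tendsto_zero:
  assumes "sets F = sets borel" "\<theta> \<in> interior (cgf_dom F)"
  shows "(tail_moment F \<theta> \<longlongrightarrow> 0) at_top"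
proof -
  obtain c where c: "0 < c" "cball \<theta> c \<subseteq> cgf_dom F"
    using cball_subset_cgf_dom[OF assms(2)] .
  define M where "M = (\<integral>x. exp ((\<theta> + c / 2 + c / 2) * x) \<partial>F)"
  have "\<theta> + c / 2 + c / 2 \<in> cgf_dom F"
    using c by (auto simp: dist_real_def)
  then have upper: "\<forall>\<^sub>F v in at_top. tail_moment F \<theta> v \<le> exp (- (c / 2) * v) * M / (c / 2)"
    using c tail_moment_le[OF assms(1), of "c / 2" "c / 2" \<theta>] by (simp add: M_def)
  have "filterlim (\<lambda>v. - (c / 2) * v) at_bot at_top"
    using c by (intro filterlim_tendsto_neg_mult_at_bot[OF tendsto_const _ filterlim_ident]) simp
  then have "((\<lambda>v. exp (- (c / 2) * v)) \<longlongrightarrow> 0) at_top"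
    by (rule filterlim_compose[OF exp_at_bot])
  then have lim: "((\<lambda>v. exp (- (c / 2) * v) * M / (c / 2)) \<longlongrightarrow> 0) at_top"
    by (intro tendsto_divide_zero tendsto_mult_left_zero)
  have lower: "\<forall>\<^sub>F v in at_top. 0 \<le> tail_moment F \<theta> v"
    using eventually_ge_at_top[of 0] by eventually_elim (rule tail_moment_nonneg)
  show ?thesis
    using tendsto_sandwich[OF lower upper tendsto_const lim] .
qed

lemma filterlim_at_top_if_mult_exp_tendsto_zero:
  fixes u :: "nat \<Rightarrow> real"
  assumes "0 < a" and lim: "(\<lambda>n. real n * exp (- a * u n)) \<longlonglongrightarrow> 0"
  shows "filterlim u at_top sequentially"
  unfolding filterlim_at_top
proof
  fix Z :: real
  have "\<forall>\<^sub>F n in sequentially. real n * exp (- a * u n) < exp (- a * Z)"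
    using order_tendstoD(2)[OF lim] by simp
  then show "\<forall>\<^sub>F n in sequentially. Z \<le> u n"
    using eventually_ge_at_top[of 1]
  proof eventually_elim
    case (elim n)
    have "exp (- a * u n) \<le> real n * exp (- a * u n)"
      using mult_right_mono[of 1 "real n" "exp (- a * u n)"] elim(2) by simp
    then have "exp (- a * u n) < exp (- a * Z)"
      using elim(1) by linarith
    then have "a * Z < a * u n"
      by simp
    then show ?case
      using \<open>0 < a\<close> by simp
  qed
qed

lemma tail_moment_mult_tendsto_zero:
  fixes u :: "nat \<Rightarrow> real"
  assumes S: "sets F = sets borel" and "0 < \<theta>'" "\<theta> + \<theta>' \<in> interior (cgf_dom F)"
    and lim: "(\<lambda>n. real n * exp (- \<theta>' * u n)) \<longlonglongrightarrow> 0"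
  shows "(\<lambda>n. real n * tail_moment F \<theta> (u n)) \<longlonglongrightarrow> 0"
proof -
  obtain \<epsilon> where \<epsilon>: "0 < \<epsilon>" "cball (\<theta> + \<theta>') \<epsilon> \<subseteq> cgf_dom F"
    using cball_subset_cgf_dom[OF assms(3)] .
  define K where "K = (\<integral>x. exp ((\<theta> + \<theta>' + \<epsilon>) * x) \<partial>F) / \<epsilon>"
  have "\<theta> + \<theta>' + \<epsilon> \<in> cgf_dom F"
    using \<epsilon> by (auto simp: dist_real_def)
  then have bound: "tail_moment F \<theta> v \<le> K * exp (- \<theta>' * v)" for v
    using tail_moment_le[OF S \<open>0 < \<epsilon>\<close>, of \<theta>' \<theta> v] \<open>0 < \<theta>'\<close>
    by (simp add: K_def mult.commute)
  have "\<forall>\<^sub>F n in sequentially. 0 \<le> u n"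
    using filterlim_at_top_if_mult_exp_tendsto_zero[OF \<open>0 < \<theta>'\<close> lim]
    by (simp add: filterlim_at_top)
  then have "\<forall>\<^sub>F n in sequentially. norm (real n * tail_moment F \<theta> (u n)) \<le> K * (real n * exp (- \<theta>' * u n))"
  proof eventually_elim
    case (elim n)
    then show ?case
      using mult_left_mono[OF bound[of "u n"], of "real n"] tail_moment_nonneg[OF elim]
      by (simp add: mult_ac)
  qed
  then show ?thesis
    by (rule Lim_null_comparison[OF _ tendsto_mult_right_zero[OF lim]])
qed

lemma measure_greaterThan_le_set_mgf:
  assumes "prob_space F" "sets F = sets borel" "integrable F (\<lambda>x. exp (\<theta> * x))" "0 \<le> \<theta>" "0 \<le> v"
  shows "measure F {v<..} \<le> (LINT x:{v<..}|F. exp (\<theta> * x))"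
proof -
  interpret prob_space F by fact
  have "measure F {v<..} = (\<integral>x. indicator {v<..} x \<partial>F)"
    using sets_eq_imp_space_eq[OF assms(2)] by simp
  also have "\<dots> \<le> (LINT x:{v<..}|F. exp (\<theta> * x))"
  proof -
    have "integrable F (indicator {v<..} :: real \<Rightarrow> real)"
      using assms(2) by (simp add: integrable_indicator_iff emeasure_eq_measure)
    then show ?thesis
      unfolding set_lebesgue_integral_def
    proof (rule integral_mono)
      show "integrable F (\<lambda>x. indicator {v<..} x *\<^sub>R exp (\<theta> * x))"
        using assms(2,3) by (intro integrable_mult_indicator) auto
    qed (use assms(4,5) in \<open>auto simp: indicator_def\<close>)
  qed
  finally show ?thesis .
qed

lemma set_mgf_le_tail_moment:
  assumes "sets F = sets borel" "integrable F (\<lambda>x. x * exp (\<theta> * x))" "1 \<le> v"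
  shows "(LINT x:{v<..}|F. exp (\<theta> * x)) \<le> tail_moment F \<theta> v"
  unfolding tail_moment_def set_lebesgue_integral_def
  using assms integrable_mult_indicator[of "{v<..}" F "\<lambda>x. x * exp (\<theta> * x)"]
  by (intro integral_mono') (auto simp: indicator_def)

lemma trunc_cgf_eq_diff_tails:
  fixes F :: "real measure" and \<theta> v :: real
  defines "M \<equiv> \<integral>x. exp (\<theta> * x) \<partial>F" and "M1 \<equiv> \<integral>x. x * exp (\<theta> * x) \<partial>F"
    and "T \<equiv> LINT x:{v<..}|F. exp (\<theta> * x)" and "q \<equiv> measure F {v<..}"
  assumes "prob_space F" and S: "sets F = sets borel" and \<theta>: "\<theta> \<in> interior (cgf_dom F)"
    and "T < M" and "q < 1"
  shows "trunc_cgf F v \<theta> = ln ((M - T) / (1 - q))"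
    and "deriv (trunc_cgf F v) \<theta> = (M1 - tail_moment F \<theta> v) / (M - T)"
proof -
  interpret prob_space F by fact
  have iM: "integrable F (\<lambda>x. exp (\<theta> * x))"
    using \<theta> interior_subset by (auto simp: cgf_dom_def)
  have lower: "(LINT x:{..v}|F. exp (\<theta> * x)) = M - T"
    "(LINT x:{..v}|F. x * exp (\<theta> * x)) = M1 - tail_moment F \<theta> v"
    using set_integral_atMost_eq_diff[OF S iM] set_integral_atMost_eq_diff[OF S integrable_mult_exp[OF S \<theta>]]
    by (simp_all add: M_def M1_def T_def tail_moment_def)
  have "measure F {..v} = 1 - q"
    using prob_compl[of "{v<..}"] S sets_eq_imp_space_eq[OF S]
    by (simp add: q_def Compl_eq_Diff_UNIV[symmetric] not_less[symmetric] flip: vimage_def)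
  then show "trunc_cgf F v \<theta> = ln ((M - T) / (1 - q))"
    "deriv (trunc_cgf F v) \<theta> = (M1 - tail_moment F \<theta> v) / (M - T)"
    using deriv_trunc_cgf[OF S \<theta>, of v] lower \<open>T < M\<close> \<open>q < 1\<close>
    by (simp_all add: trunc_cgf_def)
qed

lemma trunc_cgf_deviation_le:
  assumes "prob_space F" and S: "sets F = sets borel" and \<theta>: "\<theta> \<in> interior (cgf_dom F)" "0 \<le> \<theta>"
  obtains K where "\<And>v. 1 \<le> v \<Longrightarrow> tail_moment F \<theta> v \<le> (\<integral>x. exp (\<theta> * x) \<partial>F) / 2 \<Longrightarrow>
      tail_moment F \<theta> v \<le> 1 / 2 \<Longrightarrow>
      \<bar>deriv (trunc_cgf F v) \<theta> - deriv (cgf F) \<theta>\<bar> \<le> K * tail_moment F \<theta> v \<and>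
      \<bar>trunc_cgf F v \<theta> - cgf F \<theta>\<bar> \<le> K * tail_moment F \<theta> v"
proof -
  interpret prob_space F by fact
  define M where "M = (\<integral>x. exp (\<theta> * x) \<partial>F)"
  define M1 where "M1 = (\<integral>x. x * exp (\<theta> * x) \<partial>F)"
  have iM: "integrable F (\<lambda>x. exp (\<theta> * x))"
    using \<theta> interior_subset by (auto simp: cgf_dom_def)
  have iM1: "integrable F (\<lambda>x. x * exp (\<theta> * x))"
    using integrable_mult_exp[OF S \<theta>(1)] .
  have M: "0 < M"
    unfolding M_def using mgf_pos[OF prob_space_axioms iM] .
  define K where "K = max (2 * (\<bar>M1\<bar> + M) / M\<^sup>2) (2 / M + 2)"
  show ?thesis
  proof (rule that[of K])
    fix v :: real
    assume v: "1 \<le> v" "tail_moment F \<theta> v \<le> (\<integral>x. exp (\<theta> * x) \<partial>F) / 2"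
      "tail_moment F \<theta> v \<le> 1 / 2"
    define T where "T = (LINT x:{v<..}|F. exp (\<theta> * x))"
    define q where "q = measure F {v<..}"
    have small: "tail_moment F \<theta> v \<le> M / 2"
      using v(2) by (simp add: M_def)
    have q: "0 \<le> q" "q \<le> T" "T \<le> tail_moment F \<theta> v"
      using measure_greaterThan_le_set_mgf[OF prob_space_axioms S iM \<theta>(2), of v]
        set_mgf_le_tail_moment[OF S iM1 v(1)] v(1)
      by (auto simp: q_def T_def)
    have "T < M" "q < 1"
      using q small v(3) M by linarith+
    then have trunc: "trunc_cgf F v \<theta> = ln ((M - T) / (1 - q))"
      "deriv (trunc_cgf F v) \<theta> = (M1 - tail_moment F \<theta> v) / (M - T)"
      unfolding M_def M1_def T_def q_def
      by (rule trunc_cgf_eq_diff_tails[OF prob_space_axioms S \<theta>(1)])+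
    have full: "cgf F \<theta> = ln M" "deriv (cgf F) \<theta> = M1 / M"
      using deriv_cgf[OF prob_space_axioms S \<theta>(1)] by (simp_all add: cgf_def M_def M1_def)
    have "\<bar>deriv (trunc_cgf F v) \<theta> - deriv (cgf F) \<theta>\<bar> \<le> 2 * (\<bar>M1\<bar> + M) / M\<^sup>2 * tail_moment F \<theta> v"
      unfolding trunc full using q small M by (intro ratio_perturbation_le) auto
    moreover have "\<bar>trunc_cgf F v \<theta> - cgf F \<theta>\<bar> \<le> (2 / M + 2) * tail_moment F \<theta> v"
      unfolding trunc full using q small v(3) M by (intro ln_ratio_perturbation_le) auto
    ultimately show "\<bar>deriv (trunc_cgf F v) \<theta> - deriv (cgf F) \<theta>\<bar> \<le> K * tail_moment F \<theta> v \<and>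
        \<bar>trunc_cgf F v \<theta> - cgf F \<theta>\<bar> \<le> K * tail_moment F \<theta> v"
      unfolding K_def using q by (smt (verit) max.cobounded1 max.cobounded2 mult_right_mono)
  qed
qed

lemma eventually_trunc_cgf_deviation_le:
  assumes "prob_space F" "sets F = sets borel" "\<theta> \<in> interior (cgf_dom F)" "0 \<le> \<theta>"
  obtains K where "\<forall>\<^sub>F v in at_top.
      \<bar>deriv (trunc_cgf F v) \<theta> - deriv (cgf F) \<theta>\<bar> \<le> K * tail_moment F \<theta> v \<and>
      \<bar>trunc_cgf F v \<theta> - cgf F \<theta>\<bar> \<le> K * tail_moment F \<theta> v"
proof -
  obtain K where K: "\<And>v. 1 \<le> v \<Longrightarrow> tail_moment F \<theta> v \<le> (\<integral>x. exp (\<theta> * x) \<partial>F) / 2 \<Longrightarrow>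
      tail_moment F \<theta> v \<le> 1 / 2 \<Longrightarrow>
      \<bar>deriv (trunc_cgf F v) \<theta> - deriv (cgf F) \<theta>\<bar> \<le> K * tail_moment F \<theta> v \<and>
      \<bar>trunc_cgf F v \<theta> - cgf F \<theta>\<bar> \<le> K * tail_moment F \<theta> v"
    using trunc_cgf_deviation_le[OF assms] by blast
  have lim: "(tail_moment F \<theta> \<longlongrightarrow> 0) at_top"
    using tail_moment_tendsto_zero[OF assms(2,3)] .
  have "0 < (\<integral>x. exp (\<theta> * x) \<partial>F) / 2"
    using mgf_pos[OF assms(1)] assms(3) interior_subset by (force simp: cgf_dom_def)
  with lim have "\<forall>\<^sub>F v in at_top. tail_moment F \<theta> v < (\<integral>x. exp (\<theta> * x) \<partial>F) / 2"
    by (rule order_tendstoD(2))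
  moreover have "\<forall>\<^sub>F v in at_top. tail_moment F \<theta> v < 1 / 2"
    using lim by (rule order_tendstoD(2)) simp
  ultimately have "\<forall>\<^sub>F v in at_top.
      \<bar>deriv (trunc_cgf F v) \<theta> - deriv (cgf F) \<theta>\<bar> \<le> K * tail_moment F \<theta> v \<and>
      \<bar>trunc_cgf F v \<theta> - cgf F \<theta>\<bar> \<le> K * tail_moment F \<theta> v"
    using eventually_ge_at_top[of 1] by eventually_elim (simp add: K)
  then show ?thesis
    by (rule that)
qed

lemma trunc_cgf_deviation_tendsto_zero:
  fixes u :: "nat \<Rightarrow> real"
  assumes "prob_space F" "sets F = sets borel" "\<theta> \<in> interior (cgf_dom F)" "0 \<le> \<theta>"
    and u: "filterlim u at_top sequentially"
    and tail: "(\<lambda>n. real n * tail_moment F \<theta> (u n)) \<longlonglongrightarrow> 0"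
  shows "(\<lambda>n. real n * (deriv (trunc_cgf F (u n)) \<theta> - deriv (cgf F) \<theta>)) \<longlonglongrightarrow> 0 \<and>
         (\<lambda>n. real n * (trunc_cgf F (u n) \<theta> - cgf F \<theta>)) \<longlonglongrightarrow> 0"
proof -
  obtain K where "\<forall>\<^sub>F v in at_top.
      \<bar>deriv (trunc_cgf F v) \<theta> - deriv (cgf F) \<theta>\<bar> \<le> K * tail_moment F \<theta> v \<and>
      \<bar>trunc_cgf F v \<theta> - cgf F \<theta>\<bar> \<le> K * tail_moment F \<theta> v"
    using eventually_trunc_cgf_deviation_le[OF assms(1-4)] by blast
  from eventually_compose_filterlim[OF this u]
  have bounds: "\<forall>\<^sub>F n in sequentially.
      \<bar>deriv (trunc_cgf F (u n)) \<theta> - deriv (cgf F) \<theta>\<bar> \<le> K * tail_moment F \<theta> (u n) \<and>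
      \<bar>trunc_cgf F (u n) \<theta> - cgf F \<theta>\<bar> \<le> K * tail_moment F \<theta> (u n)" .
  have "(\<lambda>n. real n * f n) \<longlonglongrightarrow> 0"
    if "\<forall>\<^sub>F n in sequentially. \<bar>f n\<bar> \<le> K * tail_moment F \<theta> (u n)" for f :: "nat \<Rightarrow> real"
  proof (rule Lim_null_comparison)
    show "\<forall>\<^sub>F n in sequentially. norm (real n * f n) \<le> K * (real n * tail_moment F \<theta> (u n))"
      using that
    proof eventually_elim
      case (elim n)
      have "norm (real n * f n) = real n * \<bar>f n\<bar>"
        by (simp add: abs_mult)
      also have "\<dots> \<le> real n * (K * tail_moment F \<theta> (u n))"
        using elim by (rule mult_left_mono) simp
      finally show ?case
        by (simp only: mult.left_commute)
    qed
    show "(\<lambda>n. K * (real n * tail_moment F \<theta> (u n))) \<longlonglongrightarrow> 0"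
      using tail by (rule tendsto_mult_right_zero)
  qed
  with bounds show ?thesis
    by (simp add: eventually_conj_iff)
qed

theorem lemma2:
  fixes F :: "real measure" and \<mu> b \<theta>s :: real and u :: "nat \<Rightarrow> real"
  assumes "prob_space F" and "sets F = sets borel"
    and "\<mu> = (\<integral>x. x \<partial>F)"
    and "b > \<mu>"
    and "0 \<in> interior (cgf_dom F)"
    and "\<theta>s \<in> interior (cgf_dom F)" and "deriv (cgf F) \<theta>s = b"
    and "\<forall>\<theta>\<in>interior (cgf_dom F). deriv (cgf F) \<theta> = b \<longrightarrow> \<theta> = \<theta>s"
    and "\<exists>\<theta>'>0. \<theta>s + \<theta>' \<in> interior (cgf_dom F) \<and>
           (\<lambda>n. real n * exp (- \<theta>' * u n)) \<longlonglongrightarrow> 0"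
  shows "(\<lambda>n. real n * (deriv (trunc_cgf F (u n)) \<theta>s - deriv (cgf F) \<theta>s)) \<longlonglongrightarrow> 0 \<and>
         (\<lambda>n. real n * (trunc_cgf F (u n) \<theta>s - cgf F \<theta>s)) \<longlonglongrightarrow> 0"
proof -
  obtain \<theta>' where \<theta>': "0 < \<theta>'" "\<theta>s + \<theta>' \<in> interior (cgf_dom F)"
    and lim: "(\<lambda>n. real n * exp (- \<theta>' * u n)) \<longlonglongrightarrow> 0"
    using assms(9) by blast
  have "0 \<le> \<theta>s"
  proof (rule ccontr)
    assume "\<not> 0 \<le> \<theta>s"
    then have "deriv (cgf F) \<theta>s \<le> \<mu>"
      using deriv_cgf_le_mean[OF assms(1,2,6)] integrable_mult_exp[OF assms(2,5)] assms(3) by simp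
    with assms(4,7) show False
      by simp
  qed
  then show ?thesis
    using trunc_cgf_deviation_tendsto_zero[OF assms(1,2,6)]
      filterlim_at_top_if_mult_exp_tendsto_zero[OF \<theta>'(1) lim]
      tail_moment_mult_tendsto_zero[OF assms(2) \<theta>' lim]
    by blast
qed

end
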